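(* Let $d\ge2$, $n\ge1$, $\gamma$ a positive conductivity on the lattice graph below, and $d-1\le t\le dn-1$. Then $\ker T_1^{(t)}=\ker T^{(t)}$.
   Context: Lattice: $D=\{x\in\mathbb Z^d:1\le x_i\le n\ \forall i\}$, $\partial D=\{p\in\mathbb Z^d:\min_{q\in D}\|q-p\|_{\ell^1}=1\}$; $E$ = unordered pairs $pq\subseteq D\cup\partial D$ with $\|p-q\|_{\ell^1}=1$, not both in $\partial D$; $\mathcal N(p)=\{q:pq\in E\}$; each $b\in\partial D$ has a unique neighbour $q_b\in D$. Conductivity $\gamma:E\to(0,\infty)$, symmetric. $S_\gamma\varphi$ is the unique $\mathbf u\in\mathbb R^{D\cup\partial D}$ with $\sum_{q\in\mathcal N(p)}\gamma_{pq}(\mathbf u_q-\mathbf u_p)=0$ for all $p\in D$, $\mathbf u=\varphi$ on $\partial D$; $\Lambda_\gamma\varphi=(\gamma_{bq_b}(\mathbf u_{q_b}-\mathbf u_b))_{b\in\partial D}$ with $\mathbf u=S_\gamma\varphi$ (the DtN matrix). Functions on subsets are extended by zero. With $s(x)=\sum_ix_i$: $L_t=\{x\in D:s(x)=t\}$, $K_t^+=\{x\in\partial D:s(x)=t,\max_ix_i=n+1\}$, $K_t^-=\{x\in\partial D:s(x)=t,\min_ix_i=0\}$, $K_t^{\mathcal S\pm}=\bigcup_{\ell\le t}K_\ell^\pm$, $J_t^{\mathcal S}=K_t^{\mathcal S-}\cup K_{t+1}^{\mathcal S+}$. $T^{(t)}:\mathbb R^{J_t^{\mathcal S}}\to\mathbb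 R^{\partial D\setminus J_t^{\mathcal S}}$, $\varphi\mapsto(\Lambda_\gamma\varphi)|_{\partial D\setminus J_t^{\mathcal S}}$ (the submatrix $\Lambda_\gamma(\partial D\setminus J_t^{\mathcal S};J_t^{\mathcal S})$); $T_1^{(t)}:\mathbb R^{J_t^{\mathcal S}}\to\mathbb R^{L_{t+1}}$, $\varphi\mapsto(S_\gamma\varphi)|_{L_{t+1}}$. *)

theory Defs
  imports Complex_Main
begin

text \<open>Lattice points of Z^d are represented as int lists of length d.\<close>

definition l1dist :: "int list \<Rightarrow> int list \<Rightarrow> int" where
  "l1dist p q = (\<Sum>i<length p. \<bar>p ! i - q ! i\<bar>)"

definition latD :: "nat \<Rightarrow> nat \<Rightarrow> int list set" where
  "latD d n = {x. length x = d \<and> (\<forall>i<d. 1 \<le> x ! i \<and> x ! i \<le> int n)}"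

definition bdry :: "nat \<Rightarrow> nat \<Rightarrow> int list set" where
  "bdry d n = {p. length p = d \<and> (\<exists>q\<in>latD d n. l1dist q p = 1)
                 \<and> (\<forall>q\<in>latD d n. 1 \<le> l1dist q p)}"

definition is_edge :: "nat \<Rightarrow> nat \<Rightarrow> int list \<Rightarrow> int list \<Rightarrow> bool" where
  "is_edge d n p q \<longleftrightarrow> p \<in> latD d n \<union> bdry d n \<and> q \<in> latD d n \<union> bdry d n
     \<and> l1dist p q = 1 \<and> \<not> (p \<in> bdry d n \<and> q \<in> bdry d n)"

definition nbrs :: "nat \<Rightarrow> nat \<Rightarrow> int list \<Rightarrow> int list set" where
  "nbrs d n p = {q. is_edge d n p q}"

definition conductivity :: "nat \<Rightarrow> nat \<Rightarrow> (int list \<Rightarrow> int list \<Rightarrow> real) \<Rightarrow> bool" where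
  "conductivity d n \<gamma> \<longleftrightarrow> (\<forall>p q. is_edge d n p q \<longrightarrow> \<gamma> p q > 0 \<and> \<gamma> p q = \<gamma> q p)"

definition solve :: "nat \<Rightarrow> nat \<Rightarrow> (int list \<Rightarrow> int list \<Rightarrow> real) \<Rightarrow> (int list \<Rightarrow> real) \<Rightarrow> (int list \<Rightarrow> real)" where
  "solve d n \<gamma> \<phi> = (THE u. (\<forall>p\<in>latD d n. (\<Sum>q\<in>nbrs d n p. \<gamma> p q * (u q - u p)) = 0)
       \<and> (\<forall>b\<in>bdry d n. u b = \<phi> b)
       \<and> (\<forall>x. x \<notin> latD d n \<union> bdry d n \<longrightarrow> u x = 0))"

definition inner_nbr :: "nat \<Rightarrow> nat \<Rightarrow> int list \<Rightarrow> int list" where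
  "inner_nbr d n b = (THE q. q \<in> latD d n \<and> is_edge d n b q)"

definition DtN :: "nat \<Rightarrow> nat \<Rightarrow> (int list \<Rightarrow> int list \<Rightarrow> real) \<Rightarrow> (int list \<Rightarrow> real) \<Rightarrow> (int list \<Rightarrow> real)" where
  "DtN d n \<gamma> \<phi> = (\<lambda>b. if b \<in> bdry d n then
       (let u = solve d n \<gamma> \<phi>; q = inner_nbr d n b in \<gamma> b q * (u q - u b)) else 0)"

definition lsum :: "int list \<Rightarrow> int" where "lsum x = sum_list x"

definition layer :: "nat \<Rightarrow> nat \<Rightarrow> int \<Rightarrow> int list set" where
  "layer d n t = {x\<in>latD d n. lsum x = t}"

definition Kplus :: "nat \<Rightarrow> nat \<Rightarrow> int \<Rightarrow> int list set" where
  "Kplus d n t = {x\<in>bdry d n. lsum x = t \<and> Max (set x) = int n + 1}"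

definition Kminus :: "nat \<Rightarrow> nat \<Rightarrow> int \<Rightarrow> int list set" where
  "Kminus d n t = {x\<in>bdry d n. lsum x = t \<and> Min (set x) = 0}"

definition KSplus :: "nat \<Rightarrow> nat \<Rightarrow> int \<Rightarrow> int list set" where
  "KSplus d n t = (\<Union>l\<in>{l. l \<le> t}. Kplus d n l)"

definition KSminus :: "nat \<Rightarrow> nat \<Rightarrow> int \<Rightarrow> int list set" where
  "KSminus d n t = (\<Union>l\<in>{l. l \<le> t}. Kminus d n l)"

definition JS :: "nat \<Rightarrow> nat \<Rightarrow> int \<Rightarrow> int list set" where
  "JS d n t = KSminus d n t \<union> KSplus d n (t + 1)"

text \<open>Vectors in R^J, represented as functions vanishing outside J.\<close>
definition vecs_on :: "int list set \<Rightarrow> (int list \<Rightarrow> real) set" where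
  "vecs_on J = {\<phi>. \<forall>x. x \<notin> J \<longrightarrow> \<phi> x = 0}"

text \<open>Kernel of T^(t) = Lambda(\<partial>D \ J; J).\<close>
definition kerT :: "nat \<Rightarrow> nat \<Rightarrow> (int list \<Rightarrow> int list \<Rightarrow> real) \<Rightarrow> int \<Rightarrow> (int list \<Rightarrow> real) set" where
  "kerT d n \<gamma> t = {\<phi>\<in>vecs_on (JS d n t).
       \<forall>b\<in>bdry d n - JS d n t. DtN d n \<gamma> \<phi> b = 0}"

text \<open>Kernel of T_1^(t): phi \<mapsto> (S phi) restricted to L_(t+1).\<close>
definition kerT1 :: "nat \<Rightarrow> nat \<Rightarrow> (int list \<Rightarrow> int list \<Rightarrow> real) \<Rightarrow> int \<Rightarrow> (int list \<Rightarrow> real) set" where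
  "kerT1 d n \<gamma> t = {\<phi>\<in>vecs_on (JS d n t).
       \<forall>x\<in>layer d n (t + 1). solve d n \<gamma> \<phi> x = 0}"

end

(* If phi is supported on J, membership in either kernel amounts to u = S phi vanishing on the
   whole upper region {s >= t + 1} of D.  If u vanishes on the layer L_(t+1), then on {s >= t + 2}
   it is harmonic and vanishes at all outside neighbours (points of the layer, or boundary points,
   which lie outside J there), so it vanishes by the maximum principle; hence Lambda phi vanishes
   off J.  Conversely, if the Neumann data vanish off J, so do the Cauchy data, and u is propagated
   to zero through the upper region in decreasing order of (s, x_1): a point p with p_1 = n is the
   inner neighbour of a boundary point outside J, and otherwise p is the only neighbour of p + e_1
   not yet known to vanish, so harmonicity at p + e_1 forces u p = 0.  Existence and uniqueness of
   S phi follow from the maximum principle and finite-dimensional linear algebra. *)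

theory Submission
  imports Defs "Jordan_Normal_Form.Determinant"
begin

section \<open>Harmonic functions on weighted graphs\<close>

lemma weighted_sum_eq_0_imp_eq:
  fixes g u :: "'a \<Rightarrow> real"
  assumes "finite N" and pos: "\<And>q. q \<in> N \<Longrightarrow> g q > 0"
    and le: "\<And>q. q \<in> N \<Longrightarrow> u q \<le> c"
    and sum: "(\<Sum>q\<in>N. g q * (u q - c)) = 0" and "q \<in> N"
  shows "u q = c"
proof -
  have "(\<Sum>q\<in>N. g q * (c - u q)) = - (\<Sum>q\<in>N. g q * (u q - c))"
    unfolding sum_negf[symmetric] by (rule sum.cong) (simp_all add: right_diff_distrib)
  with sum have "(\<Sum>q\<in>N. g q * (c - u q)) = 0" by simp
  moreover have "0 \<le> g q * (c - u q)" if "q \<in> N" for q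
    using pos[OF that] le[OF that] by simp
  ultimately have "\<forall>q\<in>N. g q * (c - u q) = 0"
    using \<open>finite N\<close> by (simp add: sum_nonneg_eq_0_iff)
  then have "g q * (c - u q) = 0" using \<open>q \<in> N\<close> by blast
  then show ?thesis using pos[OF \<open>q \<in> N\<close>] by simp
qed

lemma harmonic_le_0_if_exterior_le_0:
  fixes u :: "'a \<Rightarrow> real" and h :: "'a \<Rightarrow> 'b::linorder"
  assumes "finite R"
    and fin: "\<And>p. p \<in> R \<Longrightarrow> finite (N p)"
    and pos: "\<And>p q. p \<in> R \<Longrightarrow> q \<in> N p \<Longrightarrow> g p q > 0"
    and harm: "\<And>p. p \<in> R \<Longrightarrow> (\<Sum>q\<in>N p. g p q * (u q - u p)) = 0"
    and ext: "\<And>p q. p \<in> R \<Longrightarrow> q \<in> N p \<Longrightarrow> q \<notin> R \<Longrightarrow> u q \<le> 0"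
    and ascent: "\<And>p. p \<in> R \<Longrightarrow> \<exists>q\<in>N p. q \<notin> R \<or> h p < h q"
    and "p \<in> R"
  shows "u p \<le> 0"
proof (rule ccontr)
  assume "\<not> u p \<le> 0"
  define M where "M = Max (u ` R)"
  have le_M: "u q \<le> M" if "q \<in> R" for q
    using \<open>finite R\<close> that by (simp add: M_def)
  have "M > 0" using le_M[OF \<open>p \<in> R\<close>] \<open>\<not> u p \<le> 0\<close> by simp
  define S where "S = {q\<in>R. u q = M}"
  have "M \<in> u ` R" using \<open>finite R\<close> \<open>p \<in> R\<close> unfolding M_def by (intro Max_in) auto
  then have "S \<noteq> {}" by (auto simp: S_def)
  moreover have "finite S" using \<open>finite R\<close> by (simp add: S_def)
  ultimately have "Max (h ` S) \<in> h ` S" by simp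
  then obtain m where "m \<in> S" and m: "h m = Max (h ` S)" by auto
  then have "m \<in> R" "u m = M" by (auto simp: S_def)
  have nbr_le_M: "u q \<le> M" if "q \<in> N m" for q
    using le_M ext[OF \<open>m \<in> R\<close> that] \<open>M > 0\<close> by (cases "q \<in> R") auto
  have nbr_eq_M: "u q = M" if "q \<in> N m" for q
  proof (rule weighted_sum_eq_0_imp_eq[where g = "g m" and N = "N m"])
    show "(\<Sum>q\<in>N m. g m q * (u q - M)) = 0" using harm[OF \<open>m \<in> R\<close>] \<open>u m = M\<close> by simp
  qed (use fin pos nbr_le_M \<open>m \<in> R\<close> that in auto)
  obtain q where q: "q \<in> N m" "q \<notin> R \<or> h m < h q" using ascent[OF \<open>m \<in> R\<close>] by blast
  show False
  proof (cases "q \<in> R")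
    case True
    then have "q \<in> S" using nbr_eq_M[OF q(1)] by (simp add: S_def)
    then have "h q \<le> h m" using \<open>finite S\<close> m by simp
    then show False using q(2) True by (meson leD)
  next
    case False
    then have "u q \<le> 0" using ext[OF \<open>m \<in> R\<close> q(1)] by simp
    then show False using nbr_eq_M[OF q(1)] \<open>M > 0\<close> by simp
  qed
qed

lemma harmonic_eq_0_if_exterior_eq_0:
  fixes u :: "'a \<Rightarrow> real" and h :: "'a \<Rightarrow> 'b::linorder"
  assumes "finite R"
    and "\<And>p. p \<in> R \<Longrightarrow> finite (N p)"
    and "\<And>p q. p \<in> R \<Longrightarrow> q \<in> N p \<Longrightarrow> g p q > 0"
    and harm: "\<And>p. p \<in> R \<Longrightarrow> (\<Sum>q\<in>N p. g p q * (u q - u p)) = 0"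
    and ext: "\<And>p q. p \<in> R \<Longrightarrow> q \<in> N p \<Longrightarrow> q \<notin> R \<Longrightarrow> u q = 0"
    and "\<And>p. p \<in> R \<Longrightarrow> \<exists>q\<in>N p. q \<notin> R \<or> h p < h q"
    and "p \<in> R"
  shows "u p = 0"
proof -
  have harm_neg: "(\<Sum>q\<in>N p. g p q * (- u q - - u p)) = 0" if "p \<in> R" for p
  proof -
    have "(\<Sum>q\<in>N p. g p q * (- u q - - u p)) = - (\<Sum>q\<in>N p. g p q * (u q - u p))"
      unfolding sum_negf[symmetric] by (rule sum.cong) (simp_all add: right_diff_distrib)
    with harm[OF that] show ?thesis by simp
  qed
  have "- u p \<le> 0"
    by (rule harmonic_le_0_if_exterior_le_0[where R = R and N = N and g = g and u = "\<lambda>x. - u x"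
          and h = h]) (use assms harm_neg in auto)
  moreover have "u p \<le> 0"
    by (rule harmonic_le_0_if_exterior_le_0[where R = R and N = N and g = g and u = u and h = h])
      (use assms in auto)
  ultimately show ?thesis by simp
qed

lemma mat_mult_vec_solvable_if_kernel_trivial:
  fixes A :: "'a::field mat"
  assumes A: "A \<in> carrier_mat N N"
    and ker: "\<And>v. v \<in> carrier_vec N \<Longrightarrow> A *\<^sub>v v = 0\<^sub>v N \<Longrightarrow> v = 0\<^sub>v N"
    and b: "b \<in> carrier_vec N"
  obtains v where "v \<in> carrier_vec N" and "A *\<^sub>v v = b"
proof -
  have "det A \<noteq> 0"
  proof
    assume "det A = 0"
    then obtain v where "v \<in> carrier_vec N" "v \<noteq> 0\<^sub>v N" "A *\<^sub>v v = 0\<^sub>v N"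
      using det_0_iff_vec_prod_zero_field[OF A] by blast
    with ker show False by blast
  qed
  then have "A \<in> Units (ring_mat TYPE('a) N ())" by (rule det_non_zero_imp_unit[OF A])
  then obtain B where B: "B \<in> carrier_mat N N" "A * B = 1\<^sub>m N"
    by (auto simp: Units_def ring_mat_def)
  have "A *\<^sub>v (B *\<^sub>v b) = b"
    using assoc_mult_mat_vec[OF A B(1) b, symmetric] B(2) b by simp
  with B(1) b show ?thesis by (intro that[of "B *\<^sub>v b"]) auto
qed

lemma linear_system_solvable_if_kernel_trivial:
  fixes c :: "'a \<Rightarrow> 'a \<Rightarrow> 'b::field"
  assumes "finite S"
    and ker: "\<And>x q. (\<And>p. p \<in> S \<Longrightarrow> (\<Sum>q\<in>S. c p q * x q) = 0)
                \<Longrightarrow> q \<in> S \<Longrightarrow> x q = 0"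
  obtains x where "\<And>p. p \<in> S \<Longrightarrow> (\<Sum>q\<in>S. c p q * x q) = b p"
proof -
  define N where "N = card S"
  obtain e where e: "bij_betw e {0..<N} S"
    using ex_bij_betw_nat_finite[OF \<open>finite S\<close>] unfolding N_def by blast
  then have e_in: "e i \<in> S" if "i < N" for i
    using that by (auto simp: bij_betw_def)
  have e_onto: "\<exists>i<N. p = e i" if "p \<in> S" for p
    using e that by (auto simp: bij_betw_def)
  define A where "A = mat N N (\<lambda>(i, j). c (e i) (e j))"
  define fun_of :: "'b vec \<Rightarrow> 'a \<Rightarrow> 'b" where "fun_of v q = v $ inv_into {0..<N} e q" for v q
  have fun_of_e: "fun_of v (e j) = v $ j" if "j < N" for v j
    using e that by (simp add: fun_of_def bij_betw_inv_into_left)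
  have mult: "(A *\<^sub>v v) $ i = (\<Sum>q\<in>S. c (e i) q * fun_of v q)"
    if "v \<in> carrier_vec N" "i < N" for v i
  proof -
    have "(A *\<^sub>v v) $ i = (\<Sum>j\<in>{0..<N}. c (e i) (e j) * fun_of v (e j))"
      using that by (simp add: A_def scalar_prod_def fun_of_e mult.commute)
    also have "\<dots> = (\<Sum>q\<in>S. c (e i) q * fun_of v q)"
      by (rule sum.reindex_bij_betw[OF e])
    finally show ?thesis .
  qed
  have "v = 0\<^sub>v N" if v: "v \<in> carrier_vec N" "A *\<^sub>v v = 0\<^sub>v N" for v
  proof -
    have zero: "fun_of v q = 0" if "q \<in> S" for q
    proof (rule ker[OF _ that])
      fix p assume "p \<in> S"
      then obtain i where "i < N" "p = e i" using e_onto by blast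
      then show "(\<Sum>q\<in>S. c p q * fun_of v q) = 0" using mult[OF v(1)] v(2) by simp
    qed
    show ?thesis
    proof (rule eq_vecI)
      fix j assume "j < dim_vec (0\<^sub>v N)"
      then have "j < N" by simp
      then show "v $ j = 0\<^sub>v N $ j" using fun_of_e[of j v] zero e_in by simp
    qed (use v(1) in simp)
  qed
  then obtain v where v: "v \<in> carrier_vec N" "A *\<^sub>v v = vec N (\<lambda>i. b (e i))"
    using mat_mult_vec_solvable_if_kernel_trivial[of A N "vec N (\<lambda>i. b (e i))"]
    by (auto simp: A_def)
  show ?thesis
  proof
    fix p assume "p \<in> S"
    then obtain i where "i < N" "p = e i" using e_onto by blast
    then show "(\<Sum>q\<in>S. c p q * fun_of v q) = b p" using mult[OF v(1)] v(2) by simp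
  qed
qed

definition graph_laplacian ::
    "('a \<Rightarrow> 'a set) \<Rightarrow> ('a \<Rightarrow> 'a \<Rightarrow> real) \<Rightarrow> 'a \<Rightarrow> 'a \<Rightarrow> real" where
  "graph_laplacian N g p q =
     (if q \<in> N p then g p q else 0) - (if q = p then (\<Sum>r\<in>N p. g p r) else 0)"

lemma sum_graph_laplacian:
  assumes "finite S" and "finite (N p)" and "p \<in> S" and zero: "\<And>q. q \<notin> S \<Longrightarrow> x q = 0"
  shows "(\<Sum>q\<in>S. graph_laplacian N g p q * x q) = (\<Sum>q\<in>N p. g p q * (x q - x p))"
proof -
  have "(\<Sum>q\<in>S. graph_laplacian N g p q * x q)
      = (\<Sum>q\<in>S. if q \<in> N p then g p q * x q else 0)
        - (\<Sum>q\<in>S. if q = p then (\<Sum>r\<in>N p. g p r) * x q else 0)"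
    unfolding sum_subtractf[symmetric] by (rule sum.cong) (auto simp: graph_laplacian_def algebra_simps)
  also have "\<dots> = (\<Sum>q\<in>S \<inter> N p. g p q * x q) - (\<Sum>r\<in>N p. g p r) * x p"
    using assms(1,3) by (simp add: sum.inter_restrict)
  also have "(\<Sum>q\<in>S \<inter> N p. g p q * x q) = (\<Sum>q\<in>N p. g p q * x q)"
    using assms(2) zero by (intro sum.mono_neutral_left) auto
  also have "\<dots> - (\<Sum>r\<in>N p. g p r) * x p = (\<Sum>q\<in>N p. g p q * (x q - x p))"
    by (simp add: sum_distrib_right sum_subtractf right_diff_distrib)
  finally show ?thesis .
qed

lemma graph_dirichlet_problem_solvable:
  fixes g :: "'a \<Rightarrow> 'a \<Rightarrow> real" and \<psi> :: "'a \<Rightarrow> real"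
  assumes "finite S" and fin: "\<forall>p\<in>S. finite (N p)"
    and unique: "\<forall>w. (\<forall>p\<in>S. (\<Sum>q\<in>N p. g p q * (w q - w p)) = 0)
                  \<longrightarrow> (\<forall>q. q \<notin> S \<longrightarrow> w q = 0) \<longrightarrow> (\<forall>p\<in>S. w p = 0)"
  shows "\<exists>u. (\<forall>p\<in>S. (\<Sum>q\<in>N p. g p q * (u q - u p)) = 0) \<and> (\<forall>q. q \<notin> S \<longrightarrow> u q = \<psi> q)"
proof -
  define inside :: "('a \<Rightarrow> real) \<Rightarrow> 'a \<Rightarrow> real"
    where "inside x q = (if q \<in> S then x q else 0)" for x q
  define outside where "outside q = (if q \<in> S then 0 else \<psi> q)" for q
  have lap: "(\<Sum>q\<in>S. graph_laplacian N g p q * x q) = (\<Sum>q\<in>N p. g p q * (inside x q - inside x p))"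
    if "p \<in> S" for p x
  proof -
    have "(\<Sum>q\<in>S. graph_laplacian N g p q * x q) = (\<Sum>q\<in>S. graph_laplacian N g p q * inside x q)"
      by (rule sum.cong) (simp_all add: inside_def)
    also have "\<dots> = (\<Sum>q\<in>N p. g p q * (inside x q - inside x p))"
      using \<open>finite S\<close> fin that by (intro sum_graph_laplacian) (simp_all add: inside_def)
    finally show ?thesis .
  qed
  have ker: "x q = 0"
    if "\<And>p. p \<in> S \<Longrightarrow> (\<Sum>q\<in>S. graph_laplacian N g p q * x q) = 0" and "q \<in> S" for x q
  proof -
    have "\<forall>p\<in>S. (\<Sum>q\<in>N p. g p q * (inside x q - inside x p)) = 0"
      using that(1) by (simp add: lap)
    moreover have "\<forall>q. q \<notin> S \<longrightarrow> inside x q = 0" by (simp add: inside_def)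
    ultimately have "inside x q = 0" using unique \<open>q \<in> S\<close> by blast
    with \<open>q \<in> S\<close> show ?thesis by (simp add: inside_def)
  qed
  obtain x where x: "\<And>p. p \<in> S \<Longrightarrow>
      (\<Sum>q\<in>S. graph_laplacian N g p q * x q) = - (\<Sum>q\<in>N p. g p q * outside q)"
    by (rule linear_system_solvable_if_kernel_trivial[where S = S and c = "graph_laplacian N g"
          and b = "\<lambda>p. - (\<Sum>q\<in>N p. g p q * outside q)"]) (use \<open>finite S\<close> ker in auto)
  show ?thesis
  proof (intro exI conjI ballI allI impI)
    fix p assume "p \<in> S"
    have "(\<Sum>q\<in>N p. g p q * ((inside x q + outside q) - (inside x p + outside p)))
        = (\<Sum>q\<in>N p. g p q * (inside x q - inside x p)) + (\<Sum>q\<in>N p. g p q * outside q)"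
      unfolding sum.distrib[symmetric] using \<open>p \<in> S\<close>
      by (intro sum.cong) (simp_all add: outside_def algebra_simps)
    also have "\<dots> = 0" using x[OF \<open>p \<in> S\<close>] lap[OF \<open>p \<in> S\<close>] by simp
    finally show "(\<Sum>q\<in>N p. g p q * ((inside x q + outside q) - (inside x p + outside p))) = 0" .
  next
    fix q assume "q \<notin> S"
    then show "inside x q + outside q = \<psi> q" by (simp add: inside_def outside_def)
  qed
qed

section \<open>Geometry of the lattice cube and its boundary\<close>

lemma l1dist_commute: "length p = length q \<Longrightarrow> l1dist p q = l1dist q p"
  unfolding l1dist_def by (simp add: abs_minus_commute)

lemma l1dist_list_update: "j < length p \<Longrightarrow> l1dist p (p[j := v]) = \<bar>p ! j - v\<bar>"
proof -
  assume "j < length p"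
  then have "l1dist p (p[j := v]) = (\<Sum>i<length p. if i = j then \<bar>p ! j - v\<bar> else 0)"
    unfolding l1dist_def by (intro sum.cong) (auto simp: nth_list_update)
  with \<open>j < length p\<close> show ?thesis by simp
qed

lemma l1dist_ge_1:
  assumes "length p = length q" and "p \<noteq> q"
  shows "1 \<le> l1dist p q"
proof -
  obtain i where i: "i < length p" "p ! i \<noteq> q ! i" using assms nth_equalityI by blast
  then have "1 \<le> \<bar>p ! i - q ! i\<bar>" by simp
  also have "\<dots> \<le> l1dist p q"
    unfolding l1dist_def using i(1) by (intro member_le_sum) auto
  finally show ?thesis .
qed

lemma l1dist_eq_1_imp_list_update:
  assumes "length q = length p" and "l1dist p q = 1"
  obtains j s where "j < length p" and "s \<in> {-1, 1}" and "q = p[j := p ! j + s]"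
proof -
  let ?f = "\<lambda>i. \<bar>p ! i - q ! i\<bar>"
  obtain j where j: "j < length p" "p ! j \<noteq> q ! j"
    using assms nth_equalityI[of p q] l1dist_def[of p p] by force
  have "l1dist p q = ?f j + (\<Sum>i\<in>{..<length p} - {j}. ?f i)"
    unfolding l1dist_def using j(1) by (simp add: sum.remove)
  moreover have "0 \<le> (\<Sum>i\<in>{..<length p} - {j}. ?f i)" by (rule sum_nonneg) simp
  moreover have "1 \<le> ?f j" using j(2) by simp
  ultimately have fj: "?f j = 1" and rest: "(\<Sum>i\<in>{..<length p} - {j}. ?f i) = 0"
    using assms(2) by linarith+
  have "q ! i = p ! i" if "i < length p" "i \<noteq> j" for i
    using rest that by (subst (asm) sum_nonneg_eq_0_iff) auto
  then have "q = p[j := p ! j + (q ! j - p ! j)]"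
    using assms(1) j(1) by (intro nth_equalityI) (auto simp: nth_list_update)
  moreover have "q ! j - p ! j \<in> {-1, 1}" using fj by auto
  ultimately show ?thesis using that j(1) by blast
qed

lemma lsum_list_update: "j < length p \<Longrightarrow> lsum (p[j := v]) = lsum p + v - p ! j"
  unfolding lsum_def by (induction p arbitrary: j) (auto split: nat.splits)

lemma length_latD: "p \<in> latD d n \<Longrightarrow> length p = d"
  by (simp add: latD_def)

lemma set_latD: "p \<in> latD d n \<Longrightarrow> set p \<subseteq> {1..int n}"
  by (auto simp: latD_def in_set_conv_nth)

lemma finite_latD: "finite (latD d n)"
proof (rule finite_subset)
  show "latD d n \<subseteq> {xs. set xs \<subseteq> {1..int n} \<and> length xs = d}"
    using set_latD length_latD by blast
qed (rule finite_lists_length_eq, simp)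

lemma list_update_in_latD_iff:
  assumes "p \<in> latD d n" and "j < d"
  shows "p[j := v] \<in> latD d n \<longleftrightarrow> v \<in> {1..int n}"
  using assms by (auto simp: latD_def nth_list_update)

lemma bdry_iff:
  "b \<in> bdry d n \<longleftrightarrow> length b = d \<and> b \<notin> latD d n \<and> (\<exists>q\<in>latD d n. l1dist q b = 1)"
proof -
  have "b \<notin> latD d n \<longleftrightarrow> (\<forall>q\<in>latD d n. 1 \<le> l1dist q b)" if "length b = d"
  proof
    assume "b \<notin> latD d n"
    then show "\<forall>q\<in>latD d n. 1 \<le> l1dist q b"
      using that length_latD by (metis l1dist_ge_1)
  next
    assume "\<forall>q\<in>latD d n. 1 \<le> l1dist q b"
    then show "b \<notin> latD d n" by (force simp: l1dist_def)
  qed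
  then show ?thesis unfolding bdry_def by blast
qed

lemma list_update_in_bdry:
  assumes "q \<in> latD d n" and "j < d" and "s \<in> {-1, 1}" and "q ! j + s \<notin> {1..int n}"
  shows "q[j := q ! j + s] \<in> bdry d n"
proof -
  have "l1dist q (q[j := q ! j + s]) = 1"
    using assms length_latD by (auto simp: l1dist_list_update)
  then show ?thesis
    using assms list_update_in_latD_iff[OF assms(1,2)] length_latD unfolding bdry_iff by auto
qed

lemma bdryE:
  assumes "b \<in> bdry d n"
  obtains q j s where "q \<in> latD d n" and "j < d" and "s \<in> {-1, 1}"
    and "q ! j + s \<notin> {1..int n}" and "b = q[j := q ! j + s]"
proof -
  obtain q where q: "q \<in> latD d n" "l1dist q b = 1" and "b \<notin> latD d n" "length b = d"
    using assms unfolding bdry_iff by blast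
  then obtain j s where "j < d" "s \<in> {-1, 1}" "b = q[j := q ! j + s]"
    using length_latD by (metis l1dist_eq_1_imp_list_update)
  moreover have "q ! j + s \<notin> {1..int n}"
    using \<open>b \<notin> latD d n\<close> calculation list_update_in_latD_iff[OF q(1)] by blast
  ultimately show ?thesis using that q(1) by blast
qed

lemma nbrs_latD:
  assumes "p \<in> latD d n"
  shows "nbrs d n p = (\<lambda>(j, s). p[j := p ! j + s]) ` ({..<d} \<times> {-1, 1})"
proof -
  have nbrs_iff: "q \<in> nbrs d n p \<longleftrightarrow> q \<in> latD d n \<union> bdry d n \<and> l1dist p q = 1" for q
    using assms by (auto simp: nbrs_def is_edge_def bdry_iff)
  show ?thesis
  proof (rule Set.set_eqI, rule iffI)
    fix q assume "q \<in> nbrs d n p"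
    then have q: "q \<in> latD d n \<union> bdry d n" "l1dist p q = 1" using nbrs_iff by auto
    then have "length q = d" using length_latD bdry_iff by blast
    with q obtain j s where "j < d" "s \<in> {-1, 1}" "q = p[j := p ! j + s]"
      using assms length_latD by (metis l1dist_eq_1_imp_list_update)
    then show "q \<in> (\<lambda>(j, s). p[j := p ! j + s]) ` ({..<d} \<times> {-1, 1})"
      by (intro rev_image_eqI[of "(j, s)"]) auto
  next
    fix q assume "q \<in> (\<lambda>(j, s). p[j := p ! j + s]) ` ({..<d} \<times> {-1, 1})"
    then obtain j s where js: "j < d" "s \<in> {-1, 1}" "q = p[j := p ! j + s]" by auto
    then have "q \<in> latD d n \<union> bdry d n"
      using list_update_in_latD_iff[OF assms js(1)] list_update_in_bdry[OF assms js(1,2)] by blast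
    moreover have "l1dist p q = 1"
      using js assms length_latD by (auto simp: l1dist_list_update)
    ultimately show "q \<in> nbrs d n p" using nbrs_iff by blast
  qed
qed

lemma finite_nbrs_latD: "p \<in> latD d n \<Longrightarrow> finite (nbrs d n p)"
  by (simp add: nbrs_latD)

lemma bdry_point_determines_inner:
  assumes q: "q \<in> latD d n" and q': "q' \<in> latD d n" and "j < d" and "j' < d"
    and "s \<in> {-1, 1}" and "s' \<in> {-1, 1}" and out: "q ! j + s \<notin> {1..int n}"
    and eq: "q[j := q ! j + s] = q'[j' := q' ! j' + s']"
  shows "q' = q"
proof -
  have len: "length q = d" "length q' = d" using q q' length_latD by auto
  have range: "p ! i \<in> {1..int n}" if "p \<in> latD d n" "i < d" for p i
    using that by (simp add: latD_def)
  have "j' = j"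
  proof (rule ccontr)
    assume "j' \<noteq> j"
    then have "q ! j + s = q' ! j"
      using arg_cong[OF eq, of "\<lambda>x. x ! j"] len \<open>j < d\<close> by simp
    then show False using out range[OF q' \<open>j < d\<close>] by simp
  qed
  then have "q ! j + s = q' ! j + s'"
    using arg_cong[OF eq, of "\<lambda>x. x ! j"] len \<open>j < d\<close> by simp
  then have "q' ! j = q ! j"
    using out range[OF q \<open>j < d\<close>] range[OF q' \<open>j < d\<close>] \<open>s \<in> {-1, 1}\<close> \<open>s' \<in> {-1, 1}\<close> by auto
  moreover have "q' ! i = q ! i" if "i < d" "i \<noteq> j" for i
    using arg_cong[OF eq, of "\<lambda>x. x ! i"] len that \<open>j' = j\<close> by simp
  ultimately show ?thesis using len by (intro nth_equalityI) auto
qed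

lemma
  assumes "q \<in> latD d n" and "j < d" and "s \<in> {-1, 1}" and "q ! j + s \<notin> {1..int n}"
  shows is_edge_list_update_bdry: "is_edge d n (q[j := q ! j + s]) q"
    and inner_nbr_list_update: "inner_nbr d n (q[j := q ! j + s]) = q"
proof -
  let ?b = "q[j := q ! j + s]"
  have "l1dist q ?b = 1" using assms length_latD by (auto simp: l1dist_list_update)
  then have "l1dist ?b q = 1" using assms(1,2) length_latD by (simp add: l1dist_commute)
  then show edge: "is_edge d n ?b q"
    using list_update_in_bdry[OF assms] assms(1) by (auto simp: is_edge_def bdry_iff)
  show "inner_nbr d n ?b = q"
    unfolding inner_nbr_def
  proof (rule the_equality)
    fix q' assume q': "q' \<in> latD d n \<and> is_edge d n ?b q'"
    then have "l1dist q' ?b = 1"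
      using assms(1,2) length_latD by (auto simp: is_edge_def l1dist_commute)
    then obtain j' s' where "j' < d" "s' \<in> {-1, 1}" "?b = q'[j' := q' ! j' + s']"
      using q' assms(1,2) length_latD by (metis l1dist_eq_1_imp_list_update length_list_update)
    then show "q' = q" using bdry_point_determines_inner assms q' by blast
  qed (use assms(1) edge in blast)
qed

lemma mem_JS_iff:
  "b \<in> JS d n t \<longleftrightarrow> b \<in> bdry d n \<and>
     (Min (set b) = 0 \<and> lsum b \<le> t \<or> Max (set b) = int n + 1 \<and> lsum b \<le> t + 1)"
  by (auto simp: JS_def KSminus_def KSplus_def Kminus_def Kplus_def)

lemma
  assumes "q \<in> latD d n" and "j < d"
  shows Min_set_list_update_latD: "Min (set (q[j := v])) = 0 \<longleftrightarrow> v = 0"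
    and Max_set_list_update_latD: "Max (set (q[j := v])) = int n + 1 \<longleftrightarrow> v = int n + 1"
proof -
  let ?A = "set (q[j := v])"
  have sub: "?A \<subseteq> insert v {1..int n}"
    using set_update_subset_insert[of q j v] set_latD[OF assms(1)] by blast
  have v: "v \<in> ?A" using assms length_latD by (simp add: set_update_memI)
  then have fin: "finite ?A" "?A \<noteq> {}" by auto
  show "Min ?A = 0 \<longleftrightarrow> v = 0"
  proof
    assume "Min ?A = 0"
    then show "v = 0" using Min_in[OF fin] sub by auto
  next
    assume "v = 0"
    then show "Min ?A = 0" using sub v fin by (intro Min_eqI) auto
  qed
  show "Max ?A = int n + 1 \<longleftrightarrow> v = int n + 1"
  proof
    assume "Max ?A = int n + 1"
    then show "v = int n + 1" using Max_in[OF fin] sub by auto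
  next
    assume "v = int n + 1"
    then show "Max ?A = int n + 1" using sub v fin by (intro Max_eqI) auto
  qed
qed

lemma list_update_in_JS_iff:
  assumes "q \<in> latD d n" and "j < d" and "s \<in> {-1, 1}" and "q ! j + s \<notin> {1..int n}"
  shows "q[j := q ! j + s] \<in> JS d n t \<longleftrightarrow> (s = -1 \<and> lsum q \<le> t + 1) \<or> (s = 1 \<and> lsum q \<le> t)"
proof -
  let ?b = "q[j := q ! j + s]"
  have b: "?b \<in> bdry d n" using list_update_in_bdry[OF assms] .
  have lsum: "lsum ?b = lsum q + s"
    using assms(1,2) length_latD by (simp add: lsum_list_update)
  have "q ! j \<in> {1..int n}" using assms(1,2) by (simp add: latD_def)
  then consider (down) "s = -1" "q ! j + s = 0" | (up) "s = 1" "q ! j + s = int n + 1"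
    using assms(3,4) by fastforce
  then show ?thesis
  proof cases
    case down
    then have "Min (set ?b) = 0" "Max (set ?b) \<noteq> int n + 1"
      using Min_set_list_update_latD[OF assms(1,2)] Max_set_list_update_latD[OF assms(1,2)] by simp_all
    then have "?b \<in> JS d n t \<longleftrightarrow> lsum ?b \<le> t" using mem_JS_iff[of ?b] b by blast
    moreover have "lsum ?b \<le> t \<longleftrightarrow> lsum q \<le> t + 1" using lsum down(1) by (simp add: diff_le_eq)
    moreover have "s \<noteq> 1" using down(1) by simp
    ultimately show ?thesis using down(1) by blast
  next
    case up
    then have "Min (set ?b) \<noteq> 0" "Max (set ?b) = int n + 1"
      using Min_set_list_update_latD[OF assms(1,2)] Max_set_list_update_latD[OF assms(1,2)] by simp_all
    then have "?b \<in> JS d n t \<longleftrightarrow> lsum ?b \<le> t + 1" using mem_JS_iff[of ?b] b by blast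
    moreover have "lsum ?b \<le> t + 1 \<longleftrightarrow> lsum q \<le> t" using lsum up(1) by simp
    moreover have "s \<noteq> -1" using up(1) by simp
    ultimately show ?thesis using up(1) by blast
  qed
qed

section \<open>The Dirichlet problem on the cube\<close>

lemma conductivity_pos: "conductivity d n \<gamma> \<Longrightarrow> is_edge d n p q \<Longrightarrow> \<gamma> p q > 0"
  by (simp add: conductivity_def)

definition harmonic_at ::
    "nat \<Rightarrow> nat \<Rightarrow> (int list \<Rightarrow> int list \<Rightarrow> real) \<Rightarrow> (int list \<Rightarrow> real) \<Rightarrow> int list \<Rightarrow> bool" where
  "harmonic_at d n \<gamma> u p \<longleftrightarrow> (\<Sum>q\<in>nbrs d n p. \<gamma> p q * (u q - u p)) = 0"

definition dirichlet_solution :: "nat \<Rightarrow> nat \<Rightarrow> (int list \<Rightarrow> int list \<Rightarrow> real) \<Rightarrow>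
    (int list \<Rightarrow> real) \<Rightarrow> (int list \<Rightarrow> real) \<Rightarrow> bool" where
  "dirichlet_solution d n \<gamma> \<phi> u \<longleftrightarrow> (\<forall>p\<in>latD d n. harmonic_at d n \<gamma> u p)
     \<and> (\<forall>b\<in>bdry d n. u b = \<phi> b) \<and> (\<forall>x. x \<notin> latD d n \<union> bdry d n \<longrightarrow> u x = 0)"

lemma harmonic_region_latD_eq_0:
  assumes cond: "conductivity d n \<gamma>" and "d \<ge> 1" and "R \<subseteq> latD d n"
    and harm: "\<And>p. p \<in> R \<Longrightarrow> harmonic_at d n \<gamma> u p"
    and ext: "\<And>p q. p \<in> R \<Longrightarrow> q \<in> nbrs d n p \<Longrightarrow> q \<notin> R \<Longrightarrow> u q = 0"
    and "p \<in> R"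
  shows "u p = 0"
proof (rule harmonic_eq_0_if_exterior_eq_0[where N = "nbrs d n" and g = \<gamma> and h = lsum])
  show "finite R" using \<open>R \<subseteq> latD d n\<close> finite_latD by (rule finite_subset)
next
  fix p assume "p \<in> R"
  then have p: "p \<in> latD d n" using \<open>R \<subseteq> latD d n\<close> by blast
  show "finite (nbrs d n p)" using finite_nbrs_latD[OF p] .
  show "(\<Sum>q\<in>nbrs d n p. \<gamma> p q * (u q - u p)) = 0"
    using harm[OF \<open>p \<in> R\<close>] by (simp add: harmonic_at_def)
  show "\<gamma> p q > 0" if "q \<in> nbrs d n p" for q
    using cond that conductivity_pos by (simp add: nbrs_def)
  have "p[0 := p ! 0 + 1] \<in> nbrs d n p"
    using \<open>d \<ge> 1\<close> by (simp add: nbrs_latD[OF p] rev_image_eqI[of "(0, 1)"])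
  moreover have "lsum (p[0 := p ! 0 + 1]) = lsum p + 1"
    using \<open>d \<ge> 1\<close> length_latD[OF p] by (simp add: lsum_list_update)
  ultimately show "\<exists>q\<in>nbrs d n p. q \<notin> R \<or> lsum p < lsum q" by force
qed (use ext \<open>p \<in> R\<close> in auto)

lemma dirichlet_solutionD:
  assumes "dirichlet_solution d n \<gamma> \<phi> u"
  shows "p \<in> latD d n \<Longrightarrow> harmonic_at d n \<gamma> u p" and "b \<in> bdry d n \<Longrightarrow> u b = \<phi> b"
    and "x \<notin> latD d n \<Longrightarrow> x \<notin> bdry d n \<Longrightarrow> u x = 0"
  using assms by (simp_all add: dirichlet_solution_def)

lemma dirichlet_solution_unique:
  assumes "conductivity d n \<gamma>" and "d \<ge> 1"
    and u: "dirichlet_solution d n \<gamma> \<phi> u" and v: "dirichlet_solution d n \<gamma> \<phi> v"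
  shows "u = v"
proof (rule ext)
  fix x
  have outside: "u q = v q" if "q \<notin> latD d n" for q
    using dirichlet_solutionD[OF u] dirichlet_solutionD[OF v] that by (cases "q \<in> bdry d n") simp_all
  have inside: "u p - v p = 0" if "p \<in> latD d n" for p
  proof (rule harmonic_region_latD_eq_0[OF assms(1,2) order_refl _ _ that])
    fix p assume "p \<in> latD d n"
    have "(\<Sum>q\<in>nbrs d n p. \<gamma> p q * ((u q - v q) - (u p - v p)))
        = (\<Sum>q\<in>nbrs d n p. \<gamma> p q * (u q - u p)) - (\<Sum>q\<in>nbrs d n p. \<gamma> p q * (v q - v p))"
      unfolding sum_subtractf[symmetric] by (rule sum.cong) (simp_all add: algebra_simps)
    with dirichlet_solutionD(1)[OF u \<open>p \<in> latD d n\<close>] dirichlet_solutionD(1)[OF v \<open>p \<in> latD d n\<close>]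
    show "harmonic_at d n \<gamma> (\<lambda>x. u x - v x) p" by (simp add: harmonic_at_def)
  qed (simp add: outside)
  show "u x = v x"
  proof (cases "x \<in> latD d n")
    case True
    then show ?thesis using inside[OF True] by simp
  next
    case False
    then show ?thesis by (rule outside)
  qed
qed

lemma dirichlet_solution_exists:
  assumes cond: "conductivity d n \<gamma>" and "d \<ge> 1"
  shows "\<exists>u. dirichlet_solution d n \<gamma> \<phi> u"
proof -
  have unique: "\<forall>w. (\<forall>p\<in>latD d n. (\<Sum>q\<in>nbrs d n p. \<gamma> p q * (w q - w p)) = 0)
      \<longrightarrow> (\<forall>q. q \<notin> latD d n \<longrightarrow> w q = 0) \<longrightarrow> (\<forall>p\<in>latD d n. w p = 0)"
  proof (intro allI impI ballI)
    fix w p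
    assume harm: "\<forall>p\<in>latD d n. (\<Sum>q\<in>nbrs d n p. \<gamma> p q * (w q - w p)) = 0"
      and ext: "\<forall>q. q \<notin> latD d n \<longrightarrow> w q = 0" and "p \<in> latD d n"
    show "w p = 0"
      by (rule harmonic_region_latD_eq_0[OF cond \<open>d \<ge> 1\<close> order_refl _ _ \<open>p \<in> latD d n\<close>])
        (use harm ext in \<open>auto simp: harmonic_at_def\<close>)
  qed
  obtain u where harm: "\<forall>p\<in>latD d n. (\<Sum>q\<in>nbrs d n p. \<gamma> p q * (u q - u p)) = 0"
    and ext: "\<forall>q. q \<notin> latD d n \<longrightarrow> u q = (if q \<in> bdry d n then \<phi> q else 0)"
    using graph_dirichlet_problem_solvable[OF finite_latD _ unique,
        where \<psi> = "\<lambda>q. if q \<in> bdry d n then \<phi> q else 0"] finite_nbrs_latD by blast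
  have "dirichlet_solution d n \<gamma> \<phi> u"
    unfolding dirichlet_solution_def harmonic_at_def
  proof (intro conjI ballI allI impI)
    fix b assume "b \<in> bdry d n"
    then show "u b = \<phi> b" using ext by (simp add: bdry_iff)
  qed (use harm ext in auto)
  then show ?thesis by blast
qed

lemma dirichlet_solution_solve:
  assumes "conductivity d n \<gamma>" and "d \<ge> 1"
  shows "dirichlet_solution d n \<gamma> \<phi> (solve d n \<gamma> \<phi>)"
proof -
  have "solve d n \<gamma> \<phi> = (THE u. dirichlet_solution d n \<gamma> \<phi> u)"
    by (simp only: solve_def dirichlet_solution_def harmonic_at_def)
  moreover have "\<exists>!u. dirichlet_solution d n \<gamma> \<phi> u"
    using dirichlet_solution_exists[OF assms] dirichlet_solution_unique[OF assms] by blast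
  ultimately show ?thesis by (simp add: theI')
qed

lemma solve_eq_0_outside:
  assumes "conductivity d n \<gamma>" and "d \<ge> 1" and "\<phi> \<in> vecs_on J"
    and "x \<notin> latD d n" and "x \<notin> J"
  shows "solve d n \<gamma> \<phi> x = 0"
  using dirichlet_solutionD(2,3)[OF dirichlet_solution_solve[OF assms(1,2)]] assms(3-5)
  by (cases "x \<in> bdry d n") (simp_all add: vecs_on_def)

section \<open>The two kernels\<close>

lemma solve_eq_0_above_layer:
  assumes cond: "conductivity d n \<gamma>" and "d \<ge> 1" and \<phi>: "\<phi> \<in> vecs_on (JS d n t)"
    and layer: "\<forall>x\<in>layer d n (t + 1). solve d n \<gamma> \<phi> x = 0"
    and p: "p \<in> latD d n" and "t + 1 \<le> lsum p"
  shows "solve d n \<gamma> \<phi> p = 0"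
proof (cases "lsum p = t + 1")
  case True
  then show ?thesis using layer p by (simp add: layer_def)
next
  case False
  let ?R = "{p \<in> latD d n. t + 2 \<le> lsum p}"
  show ?thesis
  proof (rule harmonic_region_latD_eq_0[OF cond \<open>d \<ge> 1\<close>, where R = ?R])
    fix p' assume "p' \<in> ?R"
    then show "harmonic_at d n \<gamma> (solve d n \<gamma> \<phi>) p'"
      using dirichlet_solutionD(1)[OF dirichlet_solution_solve[OF cond \<open>d \<ge> 1\<close>]] by blast
  next
    fix p' q assume "p' \<in> ?R" and q: "q \<in> nbrs d n p'" "q \<notin> ?R"
    then have p': "p' \<in> latD d n" "t + 2 \<le> lsum p'" by auto
    obtain j s where js: "j < d" "s \<in> {-1, 1}" "q = p'[j := p' ! j + s]"
      using q(1) nbrs_latD[OF p'(1)] by auto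
    have lsum_q: "lsum q = lsum p' + s"
      using js p'(1) length_latD by (simp add: lsum_list_update)
    show "solve d n \<gamma> \<phi> q = 0"
    proof (cases "p' ! j + s \<in> {1..int n}")
      case True
      then have "q \<in> latD d n" using list_update_in_latD_iff[OF p'(1) js(1)] js(3) by simp
      with q(2) lsum_q js(2) p'(2) have "q \<in> layer d n (t + 1)" by (auto simp: layer_def)
      then show ?thesis using layer by blast
    next
      case False
      then have "q \<notin> latD d n" "q \<notin> JS d n t"
        using list_update_in_latD_iff[OF p'(1) js(1)] list_update_in_JS_iff[OF p'(1) js(1,2) False]
          p'(2) js(3) by auto
      then show ?thesis by (rule solve_eq_0_outside[OF cond \<open>d \<ge> 1\<close> \<phi>])
    qed
  qed (use p \<open>t + 1 \<le> lsum p\<close> False in auto)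
qed

lemma DtN_eq_0_off_JS_if_layer:
  assumes cond: "conductivity d n \<gamma>" and "d \<ge> 1" and \<phi>: "\<phi> \<in> vecs_on (JS d n t)"
    and layer: "\<forall>x\<in>layer d n (t + 1). solve d n \<gamma> \<phi> x = 0"
    and b: "b \<in> bdry d n" "b \<notin> JS d n t"
  shows "DtN d n \<gamma> \<phi> b = 0"
proof -
  obtain q j s where q: "q \<in> latD d n" "j < d" "s \<in> {-1, 1}" "q ! j + s \<notin> {1..int n}"
    and b_eq: "b = q[j := q ! j + s]"
    using bdryE[OF b(1)] by blast
  have "t + 1 \<le> lsum q" using b(2) list_update_in_JS_iff[OF q, of t] q(3) b_eq by auto
  then have "solve d n \<gamma> \<phi> q = 0" by (rule solve_eq_0_above_layer[OF cond \<open>d \<ge> 1\<close> \<phi> layer q(1)])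
  moreover have "solve d n \<gamma> \<phi> b = 0"
    using solve_eq_0_outside[OF cond \<open>d \<ge> 1\<close> \<phi> _ b(2)] b(1) bdry_iff by blast
  ultimately show ?thesis
    using b(1) inner_nbr_list_update[OF q] b_eq by (simp add: DtN_def Let_def)
qed

lemma solve_eq_0_on_top_face:
  assumes cond: "conductivity d n \<gamma>" and "d \<ge> 1" and \<phi>: "\<phi> \<in> vecs_on (JS d n t)"
    and DtN: "\<forall>b\<in>bdry d n - JS d n t. DtN d n \<gamma> \<phi> b = 0"
    and p: "p \<in> latD d n" and "j < d" and "p ! j = int n" and "t + 1 \<le> lsum p"
  shows "solve d n \<gamma> \<phi> p = 0"
proof -
  let ?b = "p[j := p ! j + 1]"
  have out: "p ! j + 1 \<notin> {1..int n}" using \<open>p ! j = int n\<close> by simp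
  have b: "?b \<in> bdry d n" using list_update_in_bdry[OF p \<open>j < d\<close> _ out] by simp
  have "?b \<notin> JS d n t"
    using list_update_in_JS_iff[OF p \<open>j < d\<close> _ out] \<open>t + 1 \<le> lsum p\<close> by simp
  then have "DtN d n \<gamma> \<phi> ?b = 0" and "solve d n \<gamma> \<phi> ?b = 0"
    using DtN b solve_eq_0_outside[OF cond \<open>d \<ge> 1\<close> \<phi>] bdry_iff by auto
  moreover have "\<gamma> ?b p > 0"
    using conductivity_pos[OF cond is_edge_list_update_bdry[OF p \<open>j < d\<close> _ out]] by simp
  ultimately show ?thesis
    using b inner_nbr_list_update[OF p \<open>j < d\<close> _ out] by (simp add: DtN_def Let_def)
qed

lemma harmonic_at_eq_0_if_other_nbrs_eq_0:
  assumes cond: "conductivity d n \<gamma>" and p': "p' \<in> latD d n" and harm: "harmonic_at d n \<gamma> u p'"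
    and p: "p \<in> nbrs d n p'" and "u p' = 0"
    and others: "\<And>q. q \<in> nbrs d n p' \<Longrightarrow> q \<noteq> p \<Longrightarrow> u q = 0"
  shows "u p = 0"
proof -
  have "0 = (\<Sum>q\<in>nbrs d n p'. \<gamma> p' q * (u q - u p'))" using harm by (simp add: harmonic_at_def)
  also have "\<dots> = \<gamma> p' p * (u p - u p') + (\<Sum>q\<in>nbrs d n p' - {p}. \<gamma> p' q * (u q - u p'))"
    using finite_nbrs_latD[OF p'] p by (simp add: sum.remove)
  also have "(\<Sum>q\<in>nbrs d n p' - {p}. \<gamma> p' q * (u q - u p')) = 0"
    using others \<open>u p' = 0\<close> by (intro sum.neutral) auto
  finally have "\<gamma> p' p * u p = 0" using \<open>u p' = 0\<close> by simp
  moreover have "\<gamma> p' p > 0" using conductivity_pos[OF cond] p by (simp add: nbrs_def)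
  ultimately show ?thesis by simp
qed

text \<open>Encodes the lexicographic order on (- lsum q, - q ! 0) of the sweep by a nonnegative integer.\<close>
definition sweep_rank :: "nat \<Rightarrow> nat \<Rightarrow> int list \<Rightarrow> int" where
  "sweep_rank d n q = (int n + 1) * (int d * int n - lsum q) + (int n - q ! 0)"

lemma sweep_rank_nonneg:
  assumes "d \<ge> 1" and "q \<in> latD d n"
  shows "0 \<le> sweep_rank d n q"
proof -
  have "lsum q = (\<Sum>i<d. q ! i)"
    using assms(2) length_latD by (simp add: lsum_def sum_list_sum_nth atLeast0LessThan)
  also have "\<dots> \<le> (\<Sum>i<d. int n)" using assms(2) by (intro sum_mono) (simp add: latD_def)
  finally have "lsum q \<le> int d * int n" by simp
  moreover have "q ! 0 \<le> int n" using assms by (simp add: latD_def)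
  ultimately show ?thesis by (simp add: sweep_rank_def)
qed

lemma sweep_rank_nbrs_decrease:
  assumes p: "p \<in> latD d n" and "d \<ge> 1" and "p ! 0 < int n"
    and q: "q \<in> nbrs d n (p[0 := p ! 0 + 1])" "q \<in> latD d n" "q \<noteq> p"
  shows "lsum p \<le> lsum q" and "sweep_rank d n q < sweep_rank d n p"
proof -
  let ?p' = "p[0 := p ! 0 + 1]"
  have len: "length p = d" using p length_latD by blast
  have "1 \<le> p ! 0" using p \<open>d \<ge> 1\<close> by (simp add: latD_def)
  then have p': "?p' \<in> latD d n"
    using list_update_in_latD_iff[OF p, of 0] \<open>d \<ge> 1\<close> \<open>p ! 0 < int n\<close> by simp
  obtain j s where js: "j < d" "s \<in> {-1, 1}" "q = ?p'[j := ?p' ! j + s]"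
    using q(1) nbrs_latD[OF p'] by auto
  have lsum_q: "lsum q = lsum p + 1 + s"
    using js len \<open>d \<ge> 1\<close> by (simp add: lsum_list_update)
  have q0: "1 \<le> q ! 0" and p0: "p ! 0 \<le> int n" using q(2) p \<open>d \<ge> 1\<close> by (simp_all add: latD_def)
  have "lsum p \<le> lsum q \<and> sweep_rank d n q < sweep_rank d n p"
  proof (cases "s = 1")
    case True
    then show ?thesis using lsum_q q0 p0 by (simp add: sweep_rank_def algebra_simps)
  next
    case False
    then have "s = -1" using js(2) by simp
    have "j \<noteq> 0"
    proof
      assume "j = 0"
      then have "q = p" using js(3) \<open>s = -1\<close> len \<open>d \<ge> 1\<close> by simp
      with q(3) show False ..
    qed
    then have "q ! 0 = p ! 0 + 1" using js(3) len \<open>d \<ge> 1\<close> by simp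
    then show ?thesis using lsum_q \<open>s = -1\<close> by (simp add: sweep_rank_def)
  qed
  then show "lsum p \<le> lsum q" and "sweep_rank d n q < sweep_rank d n p" by simp_all
qed

lemma solve_eq_0_above_if_DtN:
  assumes cond: "conductivity d n \<gamma>" and "d \<ge> 1" and \<phi>: "\<phi> \<in> vecs_on (JS d n t)"
    and DtN: "\<forall>b\<in>bdry d n - JS d n t. DtN d n \<gamma> \<phi> b = 0"
    and "p \<in> latD d n" and "t + 1 \<le> lsum p"
  shows "solve d n \<gamma> \<phi> p = 0"
  using assms(5,6)
proof (induction "nat (sweep_rank d n p)" arbitrary: p rule: less_induct)
  case less
  let ?u = "solve d n \<gamma> \<phi>"
  have p: "p \<in> latD d n" and hp: "t + 1 \<le> lsum p" by fact+
  have IH: "?u q = 0" if "q \<in> latD d n" "t + 1 \<le> lsum q" "sweep_rank d n q < sweep_rank d n p" for q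
    using less.hyps[OF _ that(1,2)] sweep_rank_nonneg[OF \<open>d \<ge> 1\<close> that(1)] that(3) by simp
  have "p ! 0 \<le> int n" using p \<open>d \<ge> 1\<close> by (simp add: latD_def)
  then consider "p ! 0 = int n" | "p ! 0 < int n" by linarith
  then show "?u p = 0"
  proof cases
    case 1
    then show ?thesis
      using solve_eq_0_on_top_face[OF cond \<open>d \<ge> 1\<close> \<phi> DtN p, of 0] hp \<open>d \<ge> 1\<close> by simp
  next
    case 2
    let ?p' = "p[0 := p ! 0 + 1]"
    have len: "length p = d" using p length_latD by blast
    have "1 \<le> p ! 0" using p \<open>d \<ge> 1\<close> by (simp add: latD_def)
    then have p': "?p' \<in> latD d n"
      using list_update_in_latD_iff[OF p, of 0] \<open>d \<ge> 1\<close> 2 by simp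
    have "lsum ?p' = lsum p + 1" using len \<open>d \<ge> 1\<close> by (simp add: lsum_list_update)
    moreover have "sweep_rank d n ?p' < sweep_rank d n p"
      using len \<open>d \<ge> 1\<close> \<open>lsum ?p' = lsum p + 1\<close> by (simp add: sweep_rank_def algebra_simps)
    ultimately have "?u ?p' = 0" using IH[OF p'] hp by simp
    moreover have "p \<in> nbrs d n ?p'"
      using len \<open>d \<ge> 1\<close> by (simp add: nbrs_latD[OF p'] rev_image_eqI[of "(0, -1)"])
    moreover have "?u q = 0" if q: "q \<in> nbrs d n ?p'" "q \<noteq> p" for q
    proof (cases "q \<in> latD d n")
      case True
      then show ?thesis
        using IH sweep_rank_nbrs_decrease[OF p \<open>d \<ge> 1\<close> 2 q(1) True q(2)] hp by simp
    next
      case False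
      obtain j s where js: "j < d" "s \<in> {-1, 1}" "q = ?p'[j := ?p' ! j + s]"
        using q(1) nbrs_latD[OF p'] by auto
      then have "?p' ! j + s \<notin> {1..int n}"
        using False list_update_in_latD_iff[OF p' js(1)] by blast
      then have "q \<notin> JS d n t"
        using list_update_in_JS_iff[OF p' js(1,2)] js(3) hp \<open>lsum ?p' = lsum p + 1\<close> by auto
      then show ?thesis by (rule solve_eq_0_outside[OF cond \<open>d \<ge> 1\<close> \<phi> False])
    qed
    ultimately show ?thesis
      using harmonic_at_eq_0_if_other_nbrs_eq_0[OF cond p']
        dirichlet_solutionD(1)[OF dirichlet_solution_solve[OF cond \<open>d \<ge> 1\<close>] p'] by blast
  qed
qed

theorem lemma4p1:
  fixes d n :: nat and t :: int and \<gamma> :: "int list \<Rightarrow> int list \<Rightarrow> real"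
  assumes "d \<ge> 2" and "n \<ge> 1"
    and "conductivity d n \<gamma>"
    and "int d - 1 \<le> t" and "t \<le> int d * int n - 1"
  shows "kerT1 d n \<gamma> t = kerT d n \<gamma> t"
proof -
  have "d \<ge> 1" using \<open>d \<ge> 2\<close> by simp
  have "(\<forall>x\<in>layer d n (t + 1). solve d n \<gamma> \<phi> x = 0)
      \<longleftrightarrow> (\<forall>b\<in>bdry d n - JS d n t. DtN d n \<gamma> \<phi> b = 0)"
    if "\<phi> \<in> vecs_on (JS d n t)" for \<phi>
    using DtN_eq_0_off_JS_if_layer[OF \<open>conductivity d n \<gamma>\<close> \<open>d \<ge> 1\<close> that]
      solve_eq_0_above_if_DtN[OF \<open>conductivity d n \<gamma>\<close> \<open>d \<ge> 1\<close> that]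
    by (auto simp: layer_def)
  then show ?thesis unfolding kerT1_def kerT_def by blast
qed

end
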